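(* Let $\mathcal{X}$ be an input set, $\mathcal{Y}$ an output set, and $\mathcal{F}$ a set of models $f:\mathcal{X}\to\mathcal{Y}$. Let $n,m\ge 1$. For $i=1,\dots,n$ let $t_i=(p_i,S_i,\ell_i)$ be a learning task, where $p_i$ is a probability distribution on $\mathcal{X}\times\mathcal{Y}$, $\ell_i:\mathcal{Y}\times\mathcal{Y}\to[0,1]$ is a loss function, and $S_i=\{(x_{i,1},y_{i,1}),\dots,(x_{i,m},y_{i,m})\}$ is a sample of size $m$ drawn i.i.d. from $p_i$, the samples $S_1,\dots,S_n$ being drawn independently of each other. Let $\mathcal{E}$ be a set and let $l:\mathcal{E}\to\mathbb{N}$ be the length function of a prefix-free encoding of $\mathcal{E}$. For each $E\in\mathcal{E}$, let $l_E:\bigcup_{k=1}^\infty\mathcal{F}^k\to\mathbb{N}$ be the length function of a prefix-free encoding of $\bigcup_{k=1}^\infty\mathcal{F}^k$. Then for any $\delta>0$, with probability at least $1-\delta$ over the sampling of $S_1,\dots,S_n$, for all $E\in\mathcal{E}$ and all $f_1,\dots,f_n\in\mathcal{F}$: $$\mathcal{R}(f_1,\dots,f_n)\le \mathrm{kl}^{-1}\!\left(\widehat{\mathcal{R}}(f_1,\dots,f_n)\,\middle|\,\frac{\big(l(E)+l_E(f_1,\dots,f_n)\big)\log 2+\log\frac{2\sqrt{mn}}{\delta}}{mn}\right).$$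
   Context: A (prefix-free) encoding of a set $\mathcal{Z}$ is a map $C:\mathcal{Z}\to\{0,1\}^*$ such that for all $z\neq z'$, $C(z)$ is not a prefix of $C(z')$; its length function is $z\mapsto$ length of $C(z)$. $\mathcal{R}(f_1,\dots,f_n)=\frac1n\sum_{i=1}^n \mathbb{E}_{(x,y)\sim p_i}\ell_i(y,f_i(x))$ and $\widehat{\mathcal{R}}(f_1,\dots,f_n)=\frac{1}{mn}\sum_{i=1}^n\sum_{j=1}^m \ell_i(y_{i,j},f_i(x_{i,j}))$. For $q,p\in[0,1]$, $\mathrm{kl}(q|p)=q\log\frac{q}{p}+(1-q)\log\frac{1-q}{1-p}$ (Bernoulli KL divergence), and $\mathrm{kl}^{-1}(q|b)=\sup\{p\in[0,1]:\mathrm{kl}(q|p)\le b\}$. *)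

theory Defs
  imports "HOL-Probability.Probability" "HOL-Library.Sublist"
begin

definition prefix_free_on :: "('a \<Rightarrow> bool list) \<Rightarrow> 'a set \<Rightarrow> bool" where
  "prefix_free_on C A \<longleftrightarrow> (\<forall>z\<in>A. \<forall>z'\<in>A. z \<noteq> z' \<longrightarrow> \<not> prefix (C z) (C z'))"

definition is_code_length :: "('a \<Rightarrow> nat) \<Rightarrow> 'a set \<Rightarrow> bool" where
  "is_code_length L A \<longleftrightarrow> (\<exists>C. prefix_free_on C A \<and> (\<forall>z\<in>A. L z = length (C z)))"

definition xlog_ratio :: "real \<Rightarrow> real \<Rightarrow> ereal" where
  "xlog_ratio a b = (if a = 0 then 0 else if b = 0 then \<infinity> else ereal (a * ln (a / b)))"

definition kl :: "real \<Rightarrow> real \<Rightarrow> ereal" where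
  "kl q p = xlog_ratio q p + xlog_ratio (1 - q) (1 - p)"

definition kl_inv :: "real \<Rightarrow> real \<Rightarrow> real" where
  "kl_inv q b = Sup {p \<in> {0..1}. kl q p \<le> ereal b}"

definition true_risk ::
  "nat \<Rightarrow> (nat \<Rightarrow> ('x \<times> 'y) measure) \<Rightarrow> (nat \<Rightarrow> 'y \<Rightarrow> 'y \<Rightarrow> real) \<Rightarrow> (nat \<Rightarrow> 'x \<Rightarrow> 'y) \<Rightarrow> real" where
  "true_risk n p loss f = (1 / real n) * (\<Sum>i<n. \<integral>z. loss i (snd z) (f i (fst z)) \<partial>(p i))"

text \<open>Empirical multi-task risk; the sample s maps (i,j) to the j-th example of task i.\<close>
definition emp_risk ::
  "nat \<Rightarrow> nat \<Rightarrow> (nat \<Rightarrow> 'y \<Rightarrow> 'y \<Rightarrow> real) \<Rightarrow> (nat \<times> nat \<Rightarrow> 'x \<times> 'y) \<Rightarrow> (nat \<Rightarrow> 'x \<Rightarrow> 'y) \<Rightarrow> real" where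
  "emp_risk n m loss s f = (1 / (real m * real n)) *
     (\<Sum>i<n. \<Sum>j<m. loss i (snd (s (i, j))) (f i (fst (s (i, j)))))"

definition sample_measure :: "nat \<Rightarrow> nat \<Rightarrow> (nat \<Rightarrow> ('x \<times> 'y) measure) \<Rightarrow> (nat \<times> nat \<Rightarrow> 'x \<times> 'y) measure" where
  "sample_measure n m p = PiM ({..<n} \<times> {..<m}) (\<lambda>ij. p (fst ij))"

end

theory Submission
  imports Defs
begin

text \<open>
  Fix a code word, i.e. a pair of a task-shared object E and a tuple of models, with true risk R.
  Its empirical risk is the mean of mn independent [0,1]-valued losses with mean R, so
  Chernoff's method (the chord bound for exp, then AM-GM to merge the differing per-task
  factors) gives P(emp <= t) <= (exp(a t) (1 - R + R exp(-a)))^(mn), and the optimal a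
  turns this into exp(-mn b) whenever kl(t|R) > b.  The event R > kl_inv(emp|b) is the
  union of these sublevel events over such t, so it has the same bound.  Choosing b so that
  exp(-mn b) <= delta 2^(-length of the code word), the union bound over all code words of
  the concatenated prefix-free code is at most delta by Kraft's inequality.
\<close>

lemma prefix_free_on_imp_inj_on: "prefix_free_on C A \<Longrightarrow> inj_on C A"
  unfolding prefix_free_on_def inj_on_def by (metis prefix_order.order_refl)

lemma prefix_free_on_subset: "prefix_free_on C A \<Longrightarrow> B \<subseteq> A \<Longrightarrow> prefix_free_on C B"
  unfolding prefix_free_on_def by blast

lemma prefix_free_on_vimage_Cons: "prefix_free_on id W \<Longrightarrow> prefix_free_on id (Cons b -` W)"
  unfolding prefix_free_on_def by fastforce

lemma prefix_free_on_append_Sigma: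
  assumes C: "prefix_free_on C A" and D: "\<And>a. a \<in> A \<Longrightarrow> prefix_free_on (D a) (B a)"
  shows "prefix_free_on (\<lambda>(a, b). C a @ D a b) (SIGMA a:A. B a)"
  unfolding prefix_free_on_def
proof (clarsimp)
  fix a b a' b'
  assume ab: "a \<in> A" "b \<in> B a" "a' \<in> A" "b' \<in> B a'" and ne: "a = a' \<longrightarrow> b \<noteq> b'"
    and pre: "prefix (C a @ D a b) (C a' @ D a' b')"
  have "prefix (C a) (C a' @ D a' b')"
    using pre by (rule append_prefixD)
  moreover have "prefix (C a') (C a' @ D a' b')"
    by simp
  ultimately have "prefix (C a) (C a') \<or> prefix (C a') (C a)"
    by (rule prefix_same_cases)
  moreover have "\<not> prefix (C a) (C a') \<and> \<not> prefix (C a') (C a)" if "a \<noteq> a'"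
    using C ab that unfolding prefix_free_on_def by auto
  ultimately have "a = a'"
    by blast
  with pre ne have "prefix (D a b) (D a b')" and "b \<noteq> b'"
    by auto
  moreover have "prefix_free_on (D a) (B a)" and "b \<in> B a" and "b' \<in> B a"
    using D ab \<open>a = a'\<close> by auto
  ultimately show False
    unfolding prefix_free_on_def by blast
qed

lemma is_code_length_subset: "is_code_length L A \<Longrightarrow> B \<subseteq> A \<Longrightarrow> is_code_length L B"
  unfolding is_code_length_def by (meson prefix_free_on_subset subsetD)

lemma is_code_length_Sigma:
  assumes "is_code_length L A" and "\<And>a. a \<in> A \<Longrightarrow> is_code_length (L' a) (B a)"
  shows "is_code_length (\<lambda>(a, b). L a + L' a b) (SIGMA a:A. B a)"
proof -
  obtain C where C: "prefix_free_on C A" "\<forall>a\<in>A. L a = length (C a)"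
    using assms(1) unfolding is_code_length_def by blast
  obtain D where D: "\<forall>a\<in>A. prefix_free_on (D a) (B a) \<and> (\<forall>b\<in>B a. L' a b = length (D a b))"
    using assms(2) unfolding is_code_length_def by metis
  have "prefix_free_on (\<lambda>(a, b). C a @ D a b) (SIGMA a:A. B a)"
    using C D by (intro prefix_free_on_append_Sigma) auto
  with C D show ?thesis
    unfolding is_code_length_def by fastforce
qed

lemma lists_eq_Cons_images:
  assumes "[] \<notin> W"
  shows "W = Cons True ` (Cons True -` W) \<union> Cons False ` (Cons False -` W)"
proof
  show "W \<subseteq> Cons True ` (Cons True -` W) \<union> Cons False ` (Cons False -` W)"
  proof
    fix w assume "w \<in> W"
    with assms obtain b v where w: "w = b # v"
      by (cases w) auto
    with \<open>w \<in> W\<close> show "w \<in> Cons True ` (Cons True -` W) \<union> Cons False ` (Cons False -` W)"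
      by (cases b) auto
  qed
qed auto

lemma kraft_inequality_bounded_length:
  assumes "finite W" "prefix_free_on id W" "\<forall>w\<in>W. length w \<le> k"
  shows "(\<Sum>w\<in>W. (1/2::real) ^ length w) \<le> 1"
  using assms
proof (induction k arbitrary: W)
  case 0
  then have "W \<subseteq> {[]}"
    by auto
  then show ?case
    by (auto simp: subset_singleton_iff)
next
  case (Suc k)
  show ?case
  proof (cases "[] \<in> W")
    case True
    have "w = []" if "w \<in> W" for w
      using Suc.prems(2) True that unfolding prefix_free_on_def by (metis Nil_prefix id_apply)
    with True have "W = {[]}"
      by blast
    then show ?thesis
      by simp
  next
    case False
    define V where "V b = Cons b -` W" for b
    have fin: "finite (V b)" for b
      unfolding V_def using Suc.prems(1) by (rule finite_vimageI) simp
    have "\<forall>w\<in>V b. length w \<le> k" for b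
      using Suc.prems(3) unfolding V_def by fastforce
    then have IH: "(\<Sum>w\<in>V b. (1/2::real) ^ length w) \<le> 1" for b
      using Suc.IH[OF fin] prefix_free_on_vimage_Cons[OF Suc.prems(2)] unfolding V_def by blast
    have W: "W = Cons True ` V True \<union> Cons False ` V False"
      unfolding V_def using False by (rule lists_eq_Cons_images)
    have "(\<Sum>w\<in>W. (1/2::real) ^ length w)
        = (\<Sum>w\<in>Cons True ` V True. (1/2) ^ length w) + (\<Sum>w\<in>Cons False ` V False. (1/2) ^ length w)"
      unfolding W using fin by (intro sum.union_disjoint) auto
    also have "\<dots> = (1/2) * (\<Sum>w\<in>V True. (1/2) ^ length w) + (1/2) * (\<Sum>w\<in>V False. (1/2) ^ length w)"
      by (simp add: sum.reindex sum_distrib_left)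
    finally show ?thesis
      using IH[of True] IH[of False] by linarith
  qed
qed

lemma kraft_inequality_finite:
  assumes "finite W" "prefix_free_on id W"
  shows "(\<Sum>w\<in>W. (1/2::real) ^ length w) \<le> 1"
  using assms by (intro kraft_inequality_bounded_length[where k="Max (length ` W)"]) auto

lemma kraft_inequality:
  assumes "prefix_free_on C A"
  shows "(\<integral>\<^sup>+x. ennreal ((1/2) ^ length (C x)) \<partial>count_space A) \<le> 1"
proof -
  let ?W = "C ` A"
  have pf: "prefix_free_on id ?W"
    using assms unfolding prefix_free_on_def by auto
  have "(\<integral>\<^sup>+x. ennreal ((1/2) ^ length (C x)) \<partial>count_space A)
      = (\<integral>\<^sup>+w. ennreal ((1/2) ^ length w) \<partial>count_space ?W)"
    using assms by (intro nn_integral_bij_count_space inj_on_imp_bij_betw prefix_free_on_imp_inj_on)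
  also have "\<dots> \<le> 1"
  proof (cases "finite ?W")
    case True
    then show ?thesis
      using kraft_inequality_finite[OF True pf] by (simp add: nn_integral_count_space_finite sum_ennreal)
  next
    case False
    have bij: "bij_betw (from_nat_into ?W) UNIV ?W"
      by (intro bij_betw_from_nat_into False) simp
    have "(\<integral>\<^sup>+w. ennreal ((1/2) ^ length w) \<partial>count_space ?W)
        = (\<Sum>k. ennreal ((1/2) ^ length (from_nat_into ?W k)))"
      by (simp add: nn_integral_bij_count_space[OF bij, symmetric] nn_integral_count_space_nat)
    also have "\<dots> \<le> 1"
      unfolding suminf_eq_SUP
    proof (rule SUP_least)
      fix K
      have inj: "inj_on (from_nat_into ?W) {..<K}" and sub: "from_nat_into ?W ` {..<K} \<subseteq> ?W"
        using bij unfolding bij_betw_def by (auto intro: inj_on_subset)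
      have "(\<Sum>k<K. ennreal ((1/2) ^ length (from_nat_into ?W k)))
          = ennreal (\<Sum>w\<in>from_nat_into ?W ` {..<K}. (1/2) ^ length w)"
        by (simp add: sum.reindex[OF inj] sum_ennreal)
      also have "\<dots> \<le> 1"
        using kraft_inequality_finite[OF _ prefix_free_on_subset[OF pf sub]] by simp
      finally show "(\<Sum>k<K. ennreal ((1/2) ^ length (from_nat_into ?W k))) \<le> 1" .
    qed
    finally show ?thesis .
  qed
  finally show ?thesis .
qed

lemma emeasure_UN_countable_le:
  assumes I: "countable I" and sets: "\<And>i. i \<in> I \<Longrightarrow> X i \<in> sets M"
  shows "emeasure M (\<Union>(X ` I)) \<le> (\<integral>\<^sup>+i. emeasure M (X i) \<partial>count_space I)"
proof -
  have ind: "indicator (\<Union>(X ` I)) x \<le> (\<integral>\<^sup>+i. indicator (X i) x \<partial>count_space I)" for x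
  proof (cases "x \<in> \<Union>(X ` I)")
    case True
    then obtain j where j: "j \<in> I" "x \<in> X j" by auto
    have "(1::ennreal) = (\<integral>\<^sup>+i. indicator {j} i \<partial>count_space I)"
      using j by (subst nn_integral_count_space'[where A="{j}"]) auto
    also have "\<dots> \<le> (\<integral>\<^sup>+i. indicator (X i) x \<partial>count_space I)"
      using j by (intro nn_integral_mono) (auto split: split_indicator)
    finally show ?thesis using True by simp
  qed simp
  have [measurable]: "\<Union>(X ` I) \<in> sets M"
    using sets I by (intro sets.countable_UN') auto
  have "emeasure M (\<Union>(X ` I)) = (\<integral>\<^sup>+x. indicator (\<Union>(X ` I)) x \<partial>M)"
    by simp
  also have "\<dots> \<le> (\<integral>\<^sup>+x. \<integral>\<^sup>+i. indicator (X i) x \<partial>count_space I \<partial>M)"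
    by (intro nn_integral_mono ind)
  also have "\<dots> = (\<integral>\<^sup>+i. emeasure M (X i) \<partial>count_space I)"
    using sets I by (subst nn_integral_count_space_nn_integral) (auto intro!: nn_integral_cong)
  finally show ?thesis .
qed

lemma (in prob_space) prob_UN_le_kraft:
  assumes code: "prefix_free_on C I" and sets: "\<And>i. i \<in> I \<Longrightarrow> X i \<in> events"
    and prob: "\<And>i. i \<in> I \<Longrightarrow> prob (X i) \<le> \<delta> * (1/2) ^ length (C i)" and "0 \<le> \<delta>"
  shows "(\<Union>i\<in>I. X i) \<in> events" and "prob (\<Union>i\<in>I. X i) \<le> \<delta>"
proof -
  have I: "countable I"
    using code by (intro countable_image_inj_on[of C] prefix_free_on_imp_inj_on) auto
  then show "(\<Union>i\<in>I. X i) \<in> events"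
    using sets by (intro sets.countable_UN') auto
  have "emeasure M (\<Union>i\<in>I. X i) \<le> (\<integral>\<^sup>+i. emeasure M (X i) \<partial>count_space I)"
    using I sets by (rule emeasure_UN_countable_le)
  also have "\<dots> \<le> (\<integral>\<^sup>+i. ennreal \<delta> * ennreal ((1/2) ^ length (C i)) \<partial>count_space I)"
    using prob \<open>0 \<le> \<delta>\<close> by (intro nn_integral_mono) (auto simp: emeasure_eq_measure ennreal_mult[symmetric] intro: ennreal_leI)
  also have "\<dots> = ennreal \<delta> * (\<integral>\<^sup>+i. ennreal ((1/2) ^ length (C i)) \<partial>count_space I)"
    by (rule nn_integral_cmult) simp
  also have "\<dots> \<le> ennreal \<delta>"
    using mult_left_mono[OF kraft_inequality[OF code], of "ennreal \<delta>"] by simp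
  finally show "prob (\<Union>i\<in>I. X i) \<le> \<delta>"
    using \<open>0 \<le> \<delta>\<close> by (simp add: emeasure_eq_measure)
qed

lemma exp_neg_mult_le_chord:
  fixes a x :: real
  assumes "0 \<le> x" "x \<le> 1"
  shows "exp (- a * x) \<le> 1 - x + x * exp (- a)"
proof -
  have "exp ((1 - x) *\<^sub>R 0 + x *\<^sub>R (- a)) \<le> (1 - x) * exp 0 + x * exp (- a)"
    using assms by (intro convex_onD[OF exp_convex]) auto
  then show ?thesis
    by (simp add: mult.commute)
qed

lemma (in prob_space) integral_exp_neg_mult_le:
  fixes X :: "'a \<Rightarrow> real"
  assumes [measurable]: "X \<in> borel_measurable M" and X: "\<And>x. x \<in> space M \<Longrightarrow> X x \<in> {0..1}"
  shows "(\<integral>x. exp (- a * X x) \<partial>M) \<le> 1 - expectation X + expectation X * exp (- a)"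
proof -
  have int: "integrable M X"
    by (rule integrable_const_bound[where B=1]) (use X in auto)
  have "- a * X x \<le> \<bar>a\<bar>" if "x \<in> space M" for x
  proof -
    have "- a * X x \<le> \<bar>a\<bar> * X x"
      using X[OF that] by (intro mult_right_mono) auto
    also have "\<dots> \<le> \<bar>a\<bar>"
      using X[OF that] by (intro mult_left_le) auto
    finally show ?thesis .
  qed
  then have "integrable M (\<lambda>x. exp (- a * X x))"
    by (intro integrable_const_bound[where B="exp \<bar>a\<bar>"]) auto
  then have "(\<integral>x. exp (- a * X x) \<partial>M) \<le> (\<integral>x. 1 - X x + X x * exp (- a) \<partial>M)"
    using int X exp_neg_mult_le_chord by (intro integral_mono) auto
  also have "\<dots> = 1 - expectation X + expectation X * exp (- a)"
    using int by (simp add: prob_space)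
  finally show ?thesis .
qed

lemma (in prob_space) expectation_le_one:
  assumes "X \<in> borel_measurable M" and "\<And>x. x \<in> space M \<Longrightarrow> X x \<in> {0..1::real}"
  shows "expectation X \<le> 1"
  using assms by (intro integral_le_const) (auto intro!: integrable_const_bound[where B=1])

lemma prod_le_mean_power:
  fixes x :: "'i \<Rightarrow> real"
  assumes S: "finite S" and x: "\<And>i. i \<in> S \<Longrightarrow> 0 \<le> x i"
  shows "(\<Prod>i\<in>S. x i) \<le> ((\<Sum>i\<in>S. x i) / card S) ^ card S"
proof (cases "S = {}")
  case False
  define P where "P = (\<Prod>i\<in>S. x i)"
  have "P powr (1 / card S) \<le> (\<Sum>i\<in>S. x i / card S)"
    unfolding P_def using S False x by (rule arith_geom_mean)
  then have mean: "P powr (1 / card S) \<le> (\<Sum>i\<in>S. x i) / card S"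
    by (simp add: sum_divide_distrib)
  have "P \<ge> 0"
    unfolding P_def using x by (rule prod_nonneg)
  then have "P = (P powr (1 / card S)) ^ card S"
    using S False by (cases "P = 0") (auto simp: powr_realpow[symmetric] powr_powr)
  also have "\<dots> \<le> ((\<Sum>i\<in>S. x i) / card S) ^ card S"
    using mean by (intro power_mono) auto
  finally show ?thesis
    unfolding P_def .
qed simp

lemma integral_PiM_prod:
  fixes f :: "'i \<Rightarrow> 'a \<Rightarrow> real"
  assumes I: "finite I" and M: "\<And>i. i \<in> I \<Longrightarrow> prob_space (M i)"
    and f: "\<And>i. i \<in> I \<Longrightarrow> integrable (M i) (f i)"
  shows "(\<integral>x. (\<Prod>i\<in>I. f i (x i)) \<partial>PiM I M) = (\<Prod>i\<in>I. \<integral>y. f i y \<partial>M i)"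
proof -
  \<comment> \<open>PiM I only sees M on I; point masses elsewhere make the library's product_prob_space applicable.\<close>
  define N where "N i = (if i \<in> I then M i else return (count_space UNIV) undefined)" for i
  interpret N: product_prob_space N
    by (rule product_prob_spaceI) (auto simp: N_def intro!: prob_space_return M)
  have "PiM I M = PiM I N"
    by (rule PiM_cong) (auto simp: N_def)
  then show ?thesis
    using N.product_integral_prod[OF I, of f] f by (simp add: N_def cong: prod.cong)
qed

lemma integral_PiM_prod_exp_neg_le:
  fixes M :: "'i \<Rightarrow> 'a measure" and X :: "'i \<Rightarrow> 'a \<Rightarrow> real"
  assumes I: "finite I" "I \<noteq> {}" and M: "\<And>i. i \<in> I \<Longrightarrow> prob_space (M i)"
    and X_meas: "\<And>i. i \<in> I \<Longrightarrow> X i \<in> borel_measurable (M i)"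
    and X: "\<And>i x. i \<in> I \<Longrightarrow> x \<in> space (M i) \<Longrightarrow> X i x \<in> {0..1}"
    and "0 \<le> a"
  defines "\<mu> \<equiv> (\<Sum>i\<in>I. \<integral>x. X i x \<partial>M i) / card I"
  shows "(\<integral>s. (\<Prod>i\<in>I. exp (- a * X i (s i))) \<partial>PiM I M) \<le> (1 - \<mu> + \<mu> * exp (- a)) ^ card I"
proof -
  define c where "c i = 1 - (\<integral>x. X i x \<partial>M i) + (\<integral>x. X i x \<partial>M i) * exp (- a)" for i
  have c: "0 \<le> (\<integral>x. exp (- a * X i x) \<partial>M i) \<and> (\<integral>x. exp (- a * X i x) \<partial>M i) \<le> c i"
    if "i \<in> I" for i
  proof -
    interpret prob_space "M i" using M \<open>i \<in> I\<close> .
    have "0 \<le> (\<integral>x. exp (- a * X i x) \<partial>M i)"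
      by (rule Bochner_Integration.integral_nonneg) simp
    moreover have "(\<integral>x. exp (- a * X i x) \<partial>M i) \<le> c i"
      unfolding c_def using \<open>i \<in> I\<close> X_meas X by (intro integral_exp_neg_mult_le) auto
    ultimately show ?thesis ..
  qed
  then have c_nonneg: "0 \<le> c i" if "i \<in> I" for i
    using that by (meson order_trans)
  have c_mean: "(\<Sum>i\<in>I. c i) / card I = 1 - \<mu> + \<mu> * exp (- a)"
  proof -
    have "(\<Sum>i\<in>I. c i) = card I - (\<Sum>i\<in>I. \<integral>x. X i x \<partial>M i) + (\<Sum>i\<in>I. \<integral>x. X i x \<partial>M i) * exp (- a)"
      unfolding c_def by (simp add: sum.distrib sum_subtractf sum_distrib_right)
    then show ?thesis
      using I unfolding \<mu>_def by (simp add: diff_divide_distrib add_divide_distrib)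
  qed
  have "(\<integral>s. (\<Prod>i\<in>I. exp (- a * X i (s i))) \<partial>PiM I M) = (\<Prod>i\<in>I. \<integral>x. exp (- a * X i x) \<partial>M i)"
  proof (rule integral_PiM_prod[OF I(1) M])
    fix i assume "i \<in> I"
    interpret prob_space "M i" using M \<open>i \<in> I\<close> .
    show "integrable (M i) (\<lambda>x. exp (- a * X i x))"
      using X_meas X \<open>i \<in> I\<close> \<open>0 \<le> a\<close> by (intro integrable_const_bound[where B=1]) auto
  qed
  also have "\<dots> \<le> (\<Prod>i\<in>I. c i)"
    using c by (intro prod_mono) auto
  \<comment> \<open>The factors differ between coordinates; AM-GM leaves only their average, i.e. the mean risk.\<close>
  also have "\<dots> \<le> ((\<Sum>i\<in>I. c i) / card I) ^ card I"
    using I(1) c_nonneg by (rule prod_le_mean_power)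
  finally show ?thesis
    unfolding c_mean .
qed

lemma measure_PiM_mean_le_chernoff:
  fixes M :: "'i \<Rightarrow> 'a measure" and X :: "'i \<Rightarrow> 'a \<Rightarrow> real"
  assumes I: "finite I" "I \<noteq> {}" and M: "\<And>i. i \<in> I \<Longrightarrow> prob_space (M i)"
    and X_meas [measurable]: "\<And>i. i \<in> I \<Longrightarrow> X i \<in> borel_measurable (M i)"
    and X: "\<And>i x. i \<in> I \<Longrightarrow> x \<in> space (M i) \<Longrightarrow> X i x \<in> {0..1}"
    and "0 \<le> a"
  defines "\<mu> \<equiv> (\<Sum>i\<in>I. \<integral>x. X i x \<partial>M i) / card I"
  shows "measure (PiM I M) {s \<in> space (PiM I M). (\<Sum>i\<in>I. X i (s i)) / card I \<le> t}
           \<le> (exp (a * t) * (1 - \<mu> + \<mu> * exp (- a))) ^ card I"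
proof -
  interpret P: prob_space "PiM I M"
    using M by (rule prob_space_PiM)
  define N where "N = card I"
  have N: "0 < N"
    using I unfolding N_def by auto
  define u where "u s = (\<Prod>i\<in>I. exp (- a * X i (s i)))" for s
  have u_sum: "u s = exp (- a * (\<Sum>i\<in>I. X i (s i)))" for s
    unfolding u_def using I by (simp add: exp_sum sum_distrib_left)
  have [measurable]: "u \<in> borel_measurable (PiM I M)"
    unfolding u_def by measurable
  have u_bound: "u s \<in> {0..1}" if "s \<in> space (PiM I M)" for s
    unfolding u_def using that X \<open>0 \<le> a\<close>
    by (auto simp: space_PiM PiE_iff intro!: prod_nonneg prod_le_1)
  then have u_int: "integrable (PiM I M) u"
    by (intro P.integrable_const_bound[where B=1]) auto
  have "{s \<in> space (PiM I M). (\<Sum>i\<in>I. X i (s i)) / N \<le> t}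
      \<subseteq> {s \<in> space (PiM I M). exp (- a * (N * t)) \<le> u s}"
    using N \<open>0 \<le> a\<close> by (auto simp: u_sum divide_le_eq mult.commute intro: mult_left_mono)
  then have "measure (PiM I M) {s \<in> space (PiM I M). (\<Sum>i\<in>I. X i (s i)) / N \<le> t}
      \<le> measure (PiM I M) {s \<in> space (PiM I M). exp (- a * (N * t)) \<le> u s}"
    by (intro P.finite_measure_mono) auto
  also have "\<dots> \<le> (\<integral>s. u s \<partial>PiM I M) / exp (- a * (N * t))"
    using u_int u_bound by (intro integral_Markov_inequality_measure[where A="space (PiM I M)"]) auto
  also have "\<dots> = exp (a * t) ^ N * (\<integral>s. u s \<partial>PiM I M)"
    by (simp add: exp_minus divide_inverse exp_of_nat_mult[symmetric] mult.commute mult.left_commute)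
  also have "\<dots> \<le> exp (a * t) ^ N * (1 - \<mu> + \<mu> * exp (- a)) ^ N"
    unfolding u_def N_def \<mu>_def using I M X_meas X \<open>0 \<le> a\<close>
    by (intro mult_left_mono integral_PiM_prod_exp_neg_le) auto
  finally show ?thesis
    unfolding N_def by (simp add: power_mult_distrib)
qed

lemma kl_self [simp]: "kl q q = 0"
  unfolding kl_def xlog_ratio_def by simp

lemma chernoff_exponent_at_optimum:
  fixes t R :: real
  assumes t: "0 < t" "t < R" and R: "R < 1"
  defines "a \<equiv> ln R + ln (1 - t) - ln t - ln (1 - R)"
  shows "0 \<le> a"
    and "exp (a * t) * (1 - R + R * exp (- a)) = exp (- (t * ln (t / R) + (1 - t) * ln ((1 - t) / (1 - R))))"
proof -
  have pos: "0 < t" "0 < R" "0 < 1 - t" "0 < 1 - R"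
    using assms by auto
  have "t * (1 - R) \<le> R * (1 - t)"
    using t by (simp add: algebra_simps)
  then have "ln (t * (1 - R)) \<le> ln (R * (1 - t))"
    using pos by simp
  then show "0 \<le> a"
    unfolding a_def using pos by (simp add: ln_mult)
  have "exp (- a) = t * (1 - R) / (R * (1 - t))"
    unfolding a_def using pos by (simp add: exp_diff exp_add exp_minus)
  then have "1 - R + R * exp (- a) = (1 - R) / (1 - t)"
    using pos by (simp add: field_simps)
  then have "exp (a * t) * (1 - R + R * exp (- a)) = exp (a * t + ln (1 - R) - ln (1 - t))"
    using pos by (simp add: exp_add exp_diff)
  also have "a * t + ln (1 - R) - ln (1 - t) = - (t * ln (t / R) + (1 - t) * ln ((1 - t) / (1 - R)))"
    unfolding a_def using pos by (simp add: ln_div algebra_simps)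
  finally show "exp (a * t) * (1 - R + R * exp (- a)) = exp (- (t * ln (t / R) + (1 - t) * ln ((1 - t) / (1 - R))))" .
qed

lemma exists_chernoff_exponent_le:
  fixes t R b :: real
  assumes t: "0 \<le> t" "t < R" and R: "R \<le> 1" and b: "0 \<le> b" and kl: "ereal b < kl t R"
  shows "\<exists>a\<ge>0. exp (a * t) * (1 - R + R * exp (- a)) \<le> exp (- b)"
proof -
  consider "R = 1" | "t = 0" "R < 1" | "0 < t" "R < 1"
    using t R by linarith
  then show ?thesis
  proof cases
    case 1
    define a where "a = b / (1 - t)"
    have "a * (1 - t) = b"
      unfolding a_def using t 1 by simp
    then have "exp (a * t) * (1 - R + R * exp (- a)) = exp (- b)"
      using 1 by (simp add: exp_add[symmetric] algebra_simps)
    moreover have "0 \<le> a"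
      unfolding a_def using t b 1 by simp
    ultimately show ?thesis by auto
  next
    case 2
    then have "kl t R = ereal (ln (1 / (1 - R)))"
      unfolding kl_def xlog_ratio_def by simp
    with kl 2 have "b < - ln (1 - R)"
      by (simp add: ln_div)
    then have "exp (ln (1 - R)) < exp (- b)"
      by simp
    then have "1 - R < exp (- b)"
      using 2 by simp
    define d where "d = exp (- b) - (1 - R)"
    have d: "0 < d" "d \<le> R"
      unfolding d_def using \<open>1 - R < exp (- b)\<close> b by auto
    define a where "a = ln (R / d)"
    have "exp (- a) = d / R"
      unfolding a_def using d by (simp add: exp_minus)
    then have "exp (a * t) * (1 - R + R * exp (- a)) = exp (- b)"
      using 2 d t unfolding d_def by simp
    moreover have "0 \<le> a"
      unfolding a_def using d by simp
    ultimately show ?thesis by auto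
  next
    case 3
    have "kl t R = ereal (t * ln (t / R) + (1 - t) * ln ((1 - t) / (1 - R)))"
      using 3 t unfolding kl_def xlog_ratio_def by simp
    with kl have "b < t * ln (t / R) + (1 - t) * ln ((1 - t) / (1 - R))"
      by simp
    then have "exp (- (t * ln (t / R) + (1 - t) * ln ((1 - t) / (1 - R)))) \<le> exp (- b)"
      by simp
    then show ?thesis
      using chernoff_exponent_at_optimum[OF 3(1) t(2) 3(2)] by metis
  qed
qed

lemma kl_inv_less_imp:
  fixes q b R :: real
  assumes q: "0 \<le> q" "q \<le> 1" and b: "0 \<le> b" and R: "R \<le> 1" and less: "kl_inv q b < R"
  shows "q < R" and "ereal b < kl q R"
proof -
  let ?S = "{p \<in> {0..1}. kl q p \<le> ereal b}"
  have bdd: "bdd_above ?S"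
    by (rule bdd_aboveI[of _ 1]) auto
  have "q \<in> ?S"
    using q b by (simp add: zero_ereal_def)
  then have "q \<le> kl_inv q b"
    unfolding kl_inv_def using bdd by (rule cSup_upper)
  with less show "q < R"
    by simp
  have "R \<notin> ?S"
    using less cSup_upper[OF _ bdd, of R] unfolding kl_inv_def by auto
  with q \<open>q < R\<close> R show "ereal b < kl q R"
    by auto
qed

lemma (in finite_measure) measure_strict_sublevel_le:
  fixes f :: "'a \<Rightarrow> real"
  assumes [measurable]: "f \<in> borel_measurable M"
    and le: "\<And>t. t < c \<Longrightarrow> measure M {x \<in> space M. f x \<le> t} \<le> B"
  shows "measure M {x \<in> space M. f x < c} \<le> B"
proof -
  define A where "A k = {x \<in> space M. f x \<le> c - 1 / Suc k}" for k :: nat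
  have "incseq A"
    unfolding A_def incseq_def by (auto intro: order_trans[OF _ diff_left_mono[OF frac_le]])
  moreover have "range A \<subseteq> sets M"
    unfolding A_def by auto
  ultimately have "(\<lambda>k. measure M (A k)) \<longlonglongrightarrow> measure M (\<Union>k. A k)"
    by (intro finite_Lim_measure_incseq)
  moreover have "(\<Union>k. A k) = {x \<in> space M. f x < c}"
  proof (intro equalityI subsetI)
    fix x assume "x \<in> (\<Union>k. A k)"
    then obtain k where x: "x \<in> space M" "f x \<le> c - 1 / Suc k"
      unfolding A_def by auto
    moreover have "0 < 1 / real (Suc k)"
      by simp
    ultimately have "f x < c"
      by linarith
    with x show "x \<in> {x \<in> space M. f x < c}"
      by simp
  next
    fix x assume x: "x \<in> {x \<in> space M. f x < c}"
    then obtain k where "inverse (real (Suc k)) < c - f x"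
      using reals_Archimedean[of "c - f x"] by auto
    then have "f x \<le> c - 1 / Suc k"
      by (simp add: inverse_eq_divide)
    with x show "x \<in> (\<Union>k. A k)"
      unfolding A_def by blast
  qed
  moreover have "measure M (A k) \<le> B" for k
    unfolding A_def by (rule le) simp
  ultimately show ?thesis
    by (metis (lifting) LIMSEQ_le_const2)
qed

lemma (in finite_measure) measure_Ex_sublevel_le:
  fixes f :: "'a \<Rightarrow> real"
  assumes [measurable]: "f \<in> borel_measurable M" and T: "bdd_above T" and "0 \<le> B"
    and le: "\<And>t. t \<in> T \<Longrightarrow> measure M {x \<in> space M. f x \<le> t} \<le> B"
  shows "{x \<in> space M. \<exists>t\<in>T. f x \<le> t} \<in> sets M"
    and "measure M {x \<in> space M. \<exists>t\<in>T. f x \<le> t} \<le> B"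
proof -
  let ?E = "{x \<in> space M. \<exists>t\<in>T. f x \<le> t}"
  \<comment> \<open>?E is the sublevel set of Sup T, closed or open according to whether Sup T is attained.\<close>
  have "?E \<in> sets M \<and> measure M ?E \<le> B"
  proof (cases "T = {}")
    case False
    have upper: "t \<le> Sup T" if "t \<in> T" for t
      using T that by (rule cSup_upper[rotated])
    show ?thesis
    proof (cases "Sup T \<in> T")
      case True
      then have "?E = {x \<in> space M. f x \<le> Sup T}"
        using upper by (auto intro: order_trans)
      then show ?thesis
        using le[OF True] by simp
    next
      case False
      then have E: "?E = {x \<in> space M. f x < Sup T}"
        using upper less_cSup_iff[OF \<open>T \<noteq> {}\<close> T] by (force simp: order.order_iff_strict)
      have "measure M {x \<in> space M. f x < Sup T} \<le> B"
      proof (rule measure_strict_sublevel_le)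
        fix t assume "t < Sup T"
        then obtain t' where "t' \<in> T" "t < t'"
          using less_cSup_iff[OF \<open>T \<noteq> {}\<close> T] by auto
        then have "measure M {x \<in> space M. f x \<le> t} \<le> measure M {x \<in> space M. f x \<le> t'}"
          by (intro finite_measure_mono) auto
        with le[OF \<open>t' \<in> T\<close>] show "measure M {x \<in> space M. f x \<le> t} \<le> B"
          by simp
      qed simp
      with E show ?thesis
        by simp
    qed
  qed (simp add: \<open>0 \<le> B\<close>)
  then show "?E \<in> sets M" and "measure M ?E \<le> B"
    by auto
qed

lemma measure_PiM_mean_le_kl:
  fixes M :: "'i \<Rightarrow> 'a measure" and X :: "'i \<Rightarrow> 'a \<Rightarrow> real"
  assumes I: "finite I" "I \<noteq> {}" and M: "\<And>i. i \<in> I \<Longrightarrow> prob_space (M i)"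
    and X_meas: "\<And>i. i \<in> I \<Longrightarrow> X i \<in> borel_measurable (M i)"
    and X: "\<And>i x. i \<in> I \<Longrightarrow> x \<in> space (M i) \<Longrightarrow> X i x \<in> {0..1}"
  defines "\<mu> \<equiv> (\<Sum>i\<in>I. \<integral>x. X i x \<partial>M i) / card I"
  assumes t: "0 \<le> t" "t < \<mu>" and b: "0 \<le> b" "ereal b < kl t \<mu>"
  shows "measure (PiM I M) {s \<in> space (PiM I M). (\<Sum>i\<in>I. X i (s i)) / card I \<le> t} \<le> exp (- b) ^ card I"
proof -
  have "(\<Sum>i\<in>I. \<integral>x. X i x \<partial>M i) \<le> (\<Sum>i\<in>I. 1)"
    using X_meas X by (intro sum_mono prob_space.expectation_le_one[OF M]) auto
  then have "\<mu> \<le> 1"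
    unfolding \<mu>_def using I by (simp add: divide_le_eq)
  then obtain a where "0 \<le> a" and a: "exp (a * t) * (1 - \<mu> + \<mu> * exp (- a)) \<le> exp (- b)"
    using exists_chernoff_exponent_le[OF t _ b] by blast
  have "0 \<le> exp (a * t) * (1 - \<mu> + \<mu> * exp (- a))"
    using t \<open>\<mu> \<le> 1\<close> by (intro mult_nonneg_nonneg add_nonneg_nonneg) auto
  with a have "(exp (a * t) * (1 - \<mu> + \<mu> * exp (- a))) ^ card I \<le> exp (- b) ^ card I"
    by (rule power_mono)
  moreover have "measure (PiM I M) {s \<in> space (PiM I M). (\<Sum>i\<in>I. X i (s i)) / card I \<le> t}
      \<le> (exp (a * t) * (1 - \<mu> + \<mu> * exp (- a))) ^ card I"
    unfolding \<mu>_def using I M X_meas X \<open>0 \<le> a\<close> by (rule measure_PiM_mean_le_chernoff)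
  ultimately show ?thesis
    by linarith
qed

lemma measure_PiM_mean_kl_deviation:
  fixes M :: "'i \<Rightarrow> 'a measure" and X :: "'i \<Rightarrow> 'a \<Rightarrow> real"
  assumes I: "finite I" "I \<noteq> {}" and M: "\<And>i. i \<in> I \<Longrightarrow> prob_space (M i)"
    and X_meas [measurable]: "\<And>i. i \<in> I \<Longrightarrow> X i \<in> borel_measurable (M i)"
    and X: "\<And>i x. i \<in> I \<Longrightarrow> x \<in> space (M i) \<Longrightarrow> X i x \<in> {0..1}"
    and b: "0 \<le> b"
  defines "\<mu> \<equiv> (\<Sum>i\<in>I. \<integral>x. X i x \<partial>M i) / card I"
  defines "D \<equiv> {s \<in> space (PiM I M). \<exists>t. 0 \<le> t \<and> t < \<mu> \<and> ereal b < kl t \<mu> \<and> (\<Sum>i\<in>I. X i (s i)) / card I \<le> t}"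
  shows "D \<in> sets (PiM I M)" and "measure (PiM I M) D \<le> exp (- b) ^ card I"
proof -
  interpret P: prob_space "PiM I M"
    using M by (rule prob_space_PiM)
  let ?T = "{t. 0 \<le> t \<and> t < \<mu> \<and> ereal b < kl t \<mu>}"
  have D: "D = {s \<in> space (PiM I M). \<exists>t\<in>?T. (\<Sum>i\<in>I. X i (s i)) / card I \<le> t}"
    unfolding D_def by auto
  have "bdd_above ?T"
    by (rule bdd_aboveI[of _ \<mu>]) auto
  then show "D \<in> sets (PiM I M)" and "measure (PiM I M) D \<le> exp (- b) ^ card I"
    unfolding D using measure_PiM_mean_le_kl[OF I M X_meas X] b unfolding \<mu>_def
    by (intro P.measure_Ex_sublevel_le; force)+
qed

definition kl_deviation_event ::
  "nat \<Rightarrow> nat \<Rightarrow> (nat \<Rightarrow> ('x \<times> 'y) measure) \<Rightarrow> (nat \<Rightarrow> 'y \<Rightarrow> 'y \<Rightarrow> real) \<Rightarrow> (nat \<Rightarrow> 'x \<Rightarrow> 'y) \<Rightarrow> real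
     \<Rightarrow> (nat \<times> nat \<Rightarrow> 'x \<times> 'y) set" where
  "kl_deviation_event n m p loss f b = {s \<in> space (sample_measure n m p).
     \<exists>t. 0 \<le> t \<and> t < true_risk n p loss f \<and> ereal b < kl t (true_risk n p loss f) \<and> emp_risk n m loss s f \<le> t}"

lemma prob_space_sample_measure: "(\<And>i. i < n \<Longrightarrow> prob_space (p i)) \<Longrightarrow> prob_space (sample_measure n m p)"
  unfolding sample_measure_def by (rule prob_space_PiM) auto

lemma true_risk_cong: "(\<And>i. i < n \<Longrightarrow> f i = g i) \<Longrightarrow> true_risk n p loss f = true_risk n p loss g"
  unfolding true_risk_def by simp

lemma emp_risk_cong: "(\<And>i. i < n \<Longrightarrow> f i = g i) \<Longrightarrow> emp_risk n m loss s f = emp_risk n m loss s g"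
  unfolding emp_risk_def by simp

lemma true_risk_nth_map_upt [simp]: "true_risk n p loss (\<lambda>i. map f [0..<n] ! i) = true_risk n p loss f"
  by (rule true_risk_cong) simp

lemma emp_risk_nth_map_upt [simp]: "emp_risk n m loss s (\<lambda>i. map f [0..<n] ! i) = emp_risk n m loss s f"
  by (rule emp_risk_cong) simp

lemma emp_risk_eq_mean:
  "emp_risk n m loss s f = (\<Sum>ij\<in>{..<n} \<times> {..<m}. loss (fst ij) (snd (s ij)) (f (fst ij) (fst (s ij))))
     / card ({..<n} \<times> {..<m})"
  unfolding emp_risk_def by (simp add: sum.cartesian_product split_def card_cartesian_product mult.commute)

lemma true_risk_eq_mean:
  fixes m :: nat
  assumes "1 \<le> m"
  shows "true_risk n p loss f = (\<Sum>ij\<in>{..<n} \<times> {..<m}. \<integral>z. loss (fst ij) (snd z) (f (fst ij) (fst z)) \<partial>p (fst ij))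
     / card ({..<n} \<times> {..<m})"
  using assms unfolding true_risk_def
  by (simp add: sum.cartesian_product' card_cartesian_product sum_distrib_left[symmetric])

lemma emp_risk_in_unit_interval:
  assumes "1 \<le> n" "1 \<le> m" and loss: "\<And>i y y'. i < n \<Longrightarrow> 0 \<le> loss i y y' \<and> loss i y y' \<le> 1"
  shows "emp_risk n m loss s f \<in> {0..1}"
proof -
  have "(\<Sum>i<n. \<Sum>j<m. loss i (snd (s (i, j))) (f i (fst (s (i, j))))) \<le> (\<Sum>i<n. \<Sum>j<m. 1)"
    using loss by (intro sum_mono) auto
  moreover have "0 \<le> (\<Sum>i<n. \<Sum>j<m. loss i (snd (s (i, j))) (f i (fst (s (i, j)))))"
    using loss by (intro sum_nonneg) auto
  ultimately show ?thesis
    using assms unfolding emp_risk_def by (simp add: field_simps)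
qed

lemma true_risk_le_one:
  assumes "1 \<le> n" and "\<And>i. i < n \<Longrightarrow> prob_space (p i)"
    and "\<And>i y y'. i < n \<Longrightarrow> 0 \<le> loss i y y' \<and> loss i y y' \<le> 1"
    and "\<And>i. i < n \<Longrightarrow> (\<lambda>z. loss i (snd z) (f i (fst z))) \<in> borel_measurable (p i)"
  shows "true_risk n p loss f \<le> 1"
proof -
  have "(\<Sum>i<n. \<integral>z. loss i (snd z) (f i (fst z)) \<partial>p i) \<le> (\<Sum>i<n. 1)"
    using assms by (intro sum_mono prob_space.expectation_le_one) auto
  then show ?thesis
    using assms(1) unfolding true_risk_def by (simp add: field_simps)
qed

lemma kl_deviation_event_bound:
  assumes n: "1 \<le> n" and m: "1 \<le> m" and p: "\<And>i. i < n \<Longrightarrow> prob_space (p i)"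
    and loss: "\<And>i y y'. i < n \<Longrightarrow> 0 \<le> loss i y y' \<and> loss i y y' \<le> 1"
    and meas: "\<And>i. i < n \<Longrightarrow> (\<lambda>z. loss i (snd z) (f i (fst z))) \<in> borel_measurable (p i)"
    and b: "0 \<le> b"
  shows "kl_deviation_event n m p loss f b \<in> sets (sample_measure n m p)"
    and "measure (sample_measure n m p) (kl_deviation_event n m p loss f b) \<le> exp (- b) ^ (m * n)"
proof -
  let ?I = "{..<n} \<times> {..<m}"
  let ?X = "\<lambda>ij z. loss (fst ij) (snd z) (f (fst ij) (fst z))"
  have "(0, 0) \<in> ?I"
    using n m by simp
  then have I: "finite ?I" "?I \<noteq> {}"
    by auto
  have card: "card ?I = m * n"
    by (simp add: card_cartesian_product)
  have "kl_deviation_event n m p loss f b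
      = {s \<in> space (PiM ?I (\<lambda>ij. p (fst ij))). \<exists>t. 0 \<le> t
          \<and> t < (\<Sum>ij\<in>?I. \<integral>z. ?X ij z \<partial>p (fst ij)) / card ?I
          \<and> ereal b < kl t ((\<Sum>ij\<in>?I. \<integral>z. ?X ij z \<partial>p (fst ij)) / card ?I)
          \<and> (\<Sum>ij\<in>?I. ?X ij (s ij)) / card ?I \<le> t}"
    unfolding kl_deviation_event_def sample_measure_def emp_risk_eq_mean true_risk_eq_mean[OF m] ..
  moreover note measure_PiM_mean_kl_deviation[OF I, where M="\<lambda>ij. p (fst ij)" and X="?X"]
  ultimately show "kl_deviation_event n m p loss f b \<in> sets (sample_measure n m p)"
    and "measure (sample_measure n m p) (kl_deviation_event n m p loss f b) \<le> exp (- b) ^ (m * n)"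
    using p loss meas b unfolding card sample_measure_def by auto
qed

lemma true_risk_le_kl_inv_outside_kl_deviation_event:
  assumes n: "1 \<le> n" and m: "1 \<le> m" and p: "\<And>i. i < n \<Longrightarrow> prob_space (p i)"
    and loss: "\<And>i y y'. i < n \<Longrightarrow> 0 \<le> loss i y y' \<and> loss i y y' \<le> 1"
    and meas: "\<And>i. i < n \<Longrightarrow> (\<lambda>z. loss i (snd z) (f i (fst z))) \<in> borel_measurable (p i)"
    and b: "0 \<le> b"
    and s: "s \<in> space (sample_measure n m p) - kl_deviation_event n m p loss f b"
  shows "true_risk n p loss f \<le> kl_inv (emp_risk n m loss s f) b"
proof (rule ccontr)
  let ?q = "emp_risk n m loss s f"
  have q: "0 \<le> ?q" "?q \<le> 1"
    using emp_risk_in_unit_interval[OF n m] loss by auto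
  have R: "true_risk n p loss f \<le> 1"
    using n p loss meas by (rule true_risk_le_one)
  assume "\<not> true_risk n p loss f \<le> kl_inv ?q b"
  then have "kl_inv ?q b < true_risk n p loss f"
    by simp
  with q b R have "?q < true_risk n p loss f" and "ereal b < kl ?q (true_risk n p loss f)"
    by (rule kl_inv_less_imp)+
  with s q have "s \<in> kl_deviation_event n m p loss f b"
    unfolding kl_deviation_event_def by auto
  with s show False
    by simp
qed

theorem multitask_occam_kl_bound:
  fixes model :: "'h \<Rightarrow> nat \<Rightarrow> 'x \<Rightarrow> 'y" and L :: "'h \<Rightarrow> nat" and b :: "'h \<Rightarrow> real"
  assumes n: "1 \<le> n" and m: "1 \<le> m" and p: "\<And>i. i < n \<Longrightarrow> prob_space (p i)"
    and loss: "\<And>i y y'. i < n \<Longrightarrow> 0 \<le> loss i y y' \<and> loss i y y' \<le> 1"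
    and meas: "\<And>h i. h \<in> H \<Longrightarrow> i < n \<Longrightarrow> (\<lambda>z. loss i (snd z) (model h i (fst z))) \<in> borel_measurable (p i)"
    and code: "is_code_length L H" and "0 \<le> \<delta>"
    and b: "\<And>h. h \<in> H \<Longrightarrow> 0 \<le> b h"
    and weight: "\<And>h. h \<in> H \<Longrightarrow> exp (- b h) ^ (m * n) \<le> \<delta> * (1/2) ^ L h"
  shows "\<exists>A\<in>sets (sample_measure n m p). 1 - \<delta> \<le> measure (sample_measure n m p) A \<and>
           (\<forall>s\<in>A. \<forall>h\<in>H. true_risk n p loss (model h) \<le> kl_inv (emp_risk n m loss s (model h)) (b h))"
proof -
  interpret S: prob_space "sample_measure n m p"
    using p by (rule prob_space_sample_measure)
  obtain C where C: "prefix_free_on C H" "\<forall>h\<in>H. L h = length (C h)"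
    using code unfolding is_code_length_def by blast
  define U where "U = (\<Union>h\<in>H. kl_deviation_event n m p loss (model h) (b h))"
  have events: "kl_deviation_event n m p loss (model h) (b h) \<in> S.events" if "h \<in> H" for h
    using n m p loss meas[OF that] b[OF that] by (rule kl_deviation_event_bound(1))
  have "S.prob (kl_deviation_event n m p loss (model h) (b h)) \<le> exp (- b h) ^ (m * n)" if "h \<in> H" for h
    using n m p loss meas[OF that] b[OF that] by (rule kl_deviation_event_bound(2))
  then have prob: "S.prob (kl_deviation_event n m p loss (model h) (b h)) \<le> \<delta> * (1/2) ^ length (C h)"
    if "h \<in> H" for h
    using weight C(2) that by fastforce
  have "U \<in> S.events"
    unfolding U_def using C(1) events prob \<open>0 \<le> \<delta>\<close> by (rule S.prob_UN_le_kraft(1))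
  moreover have "S.prob U \<le> \<delta>"
    unfolding U_def using C(1) events prob \<open>0 \<le> \<delta>\<close> by (rule S.prob_UN_le_kraft(2))
  ultimately have U: "U \<in> S.events" "S.prob U \<le> \<delta>" .
  show ?thesis
  proof (rule bexI[of _ "space (sample_measure n m p) - U"], intro conjI ballI)
    show "1 - \<delta> \<le> S.prob (space (sample_measure n m p) - U)"
      using U S.prob_compl by simp
    fix s h assume "s \<in> space (sample_measure n m p) - U" and h: "h \<in> H"
    then have "s \<in> space (sample_measure n m p) - kl_deviation_event n m p loss (model h) (b h)"
      unfolding U_def by blast
    with n m p loss meas[OF h] b[OF h]
    show "true_risk n p loss (model h) \<le> kl_inv (emp_risk n m loss s (model h)) (b h)"
      by (rule true_risk_le_kl_inv_outside_kl_deviation_event)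
  qed (use U in auto)
qed

text \<open>
  The Chernoff bound only needs ln(1/delta) as confidence term; the larger ln(2 sqrt N / delta)
  of the statement just leaves the slack factor 2 sqrt N.
\<close>

lemma occam_penalty_bounds:
  fixes \<delta> :: real and k N :: nat
  assumes "0 < \<delta>" "\<delta> < 1" and "1 \<le> N"
  defines "\<beta> \<equiv> (real k * ln 2 + ln (2 * sqrt N / \<delta>)) / N"
  shows "0 \<le> \<beta>" and "exp (- \<beta>) ^ N \<le> \<delta> * (1/2) ^ k"
proof -
  have "1 \<le> sqrt N"
    using assms by simp
  then have "1 \<le> 2 * sqrt N" and "\<delta> \<le> 2 * sqrt N"
    using assms by linarith+
  then have "1 \<le> 2 * sqrt N / \<delta>"
    using assms by (simp add: le_divide_eq)
  then show "0 \<le> \<beta>"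
    unfolding \<beta>_def by simp
  have "exp (- \<beta>) ^ N = exp (- (real k * ln 2) - ln (2 * sqrt N / \<delta>))"
    unfolding \<beta>_def using assms by (simp add: exp_of_nat_mult[symmetric])
  also have "\<dots> = (1/2) ^ k * \<delta> / (2 * sqrt N)"
    using assms \<open>1 \<le> sqrt N\<close> by (simp add: exp_diff exp_minus exp_of_nat_mult power_one_over field_simps)
  also have "\<dots> \<le> \<delta> * (1/2) ^ k"
    using assms \<open>1 \<le> 2 * sqrt N\<close> by (simp add: divide_le_eq mult_le_cancel_left1)
  finally show "exp (- \<beta>) ^ N \<le> \<delta> * (1/2) ^ k" .
qed

theorem corollary1:
  fixes F :: "('x \<Rightarrow> 'y) set"
    and n m :: nat
    and p :: "nat \<Rightarrow> ('x \<times> 'y) measure"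
    and loss :: "nat \<Rightarrow> 'y \<Rightarrow> 'y \<Rightarrow> real"
    and Ecal :: "'e set"
    and l :: "'e \<Rightarrow> nat"
    and lE :: "'e \<Rightarrow> ('x \<Rightarrow> 'y) list \<Rightarrow> nat"
    and \<delta> :: real
  assumes "n \<ge> 1" and "m \<ge> 1"
    and "\<And>i. i < n \<Longrightarrow> prob_space (p i)"
    and "\<And>i y y'. i < n \<Longrightarrow> 0 \<le> loss i y y' \<and> loss i y y' \<le> 1"
    and "\<And>i f. i < n \<Longrightarrow> f \<in> F \<Longrightarrow> (\<lambda>z. loss i (snd z) (f (fst z))) \<in> borel_measurable (p i)"
    and "is_code_length l Ecal"
    and "\<And>E. E \<in> Ecal \<Longrightarrow> is_code_length (lE E) {fs. fs \<noteq> [] \<and> set fs \<subseteq> F}"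
    and "\<delta> > 0"
  shows "\<exists>A \<in> sets (sample_measure n m p).
           measure (sample_measure n m p) A \<ge> 1 - \<delta> \<and>
           (\<forall>s\<in>A. \<forall>E\<in>Ecal. \<forall>f. (\<forall>i<n. f i \<in> F) \<longrightarrow>
              true_risk n p loss f \<le>
              kl_inv (emp_risk n m loss s f)
                (((real (l E) + real (lE E (map f [0..<n]))) * ln 2
                  + ln (2 * sqrt (real m * real n) / \<delta>)) / (real m * real n)))"
proof (cases "\<delta> < 1")
  case False
  then show ?thesis
    by (intro bexI[of _ "{}"]) auto
next
  case True
  let ?H = "SIGMA E:Ecal. {fs. fs \<noteq> [] \<and> set fs \<subseteq> F \<and> length fs = n}"
  let ?L = "\<lambda>(E, fs). l E + lE E fs"
  let ?b = "\<lambda>h. (real (?L h) * ln 2 + ln (2 * sqrt (real (m * n)) / \<delta>)) / real (m * n)"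
  have "1 \<le> m * n"
    using assms(1,2) by simp
  note penalty = occam_penalty_bounds[OF assms(8) True this]
  have code: "is_code_length ?L ?H"
    using assms(6,7) by (intro is_code_length_subset[OF is_code_length_Sigma]) auto
  have meas: "(\<lambda>z. loss i (snd z) ((snd h ! i) (fst z))) \<in> borel_measurable (p i)" if "h \<in> ?H" "i < n" for h i
    using that nth_mem[of i "snd h"] by (intro assms(5)) auto
  have "0 \<le> ?b h" and "exp (- ?b h) ^ (m * n) \<le> \<delta> * (1/2) ^ ?L h" for h
    by (rule penalty(1), rule penalty(2))
  with assms(1-4) meas code less_imp_le[OF assms(8)]
  have "\<exists>A\<in>sets (sample_measure n m p). 1 - \<delta> \<le> measure (sample_measure n m p) A \<and>
      (\<forall>s\<in>A. \<forall>h\<in>?H. true_risk n p loss (\<lambda>i. snd h ! i) \<le> kl_inv (emp_risk n m loss s (\<lambda>i. snd h ! i)) (?b h))"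
    by (rule multitask_occam_kl_bound)
  then obtain A where A: "A \<in> sets (sample_measure n m p)" "1 - \<delta> \<le> measure (sample_measure n m p) A"
    and bound: "\<forall>s\<in>A. \<forall>h\<in>?H. true_risk n p loss (\<lambda>i. snd h ! i) \<le> kl_inv (emp_risk n m loss s (\<lambda>i. snd h ! i)) (?b h)"
    by blast
  show ?thesis
  proof (intro bexI[OF _ A(1)] conjI ballI allI impI)
    fix s E f assume s: "s \<in> A" and "E \<in> Ecal" "\<forall>i<n. f i \<in> F"
    with assms(1) have "(E, map f [0..<n]) \<in> ?H"
      by auto
    from bound[rule_format, OF s this] show "true_risk n p loss f \<le> kl_inv (emp_risk n m loss s f)
        (((real (l E) + real (lE E (map f [0..<n]))) * ln 2 + ln (2 * sqrt (real m * real n) / \<delta>)) / (real m * real n))"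
      by simp
  qed (use A in auto)
qed

end
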